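(* Let $g\geq 2$ and let $\mathfrak t_{(g)}(1)$ be the Lie algebra over a field $\mathbb K$ of characteristic zero generated by $x_1,\dots,x_g,y_1,\dots,y_g,t_{11}$ subject to the relations that $t_{11}$ is central and $\sum_{k=1}^g[x_k,y_k]=-(2-2g)t_{11}$. Then the center of $\mathfrak t_{(g)}(1)$ is one-dimensional, spanned by $t_{11}$. *)

theory Defs
  imports Main
begin

datatype gen = GX nat | GY nat | GT

text \<open>The free associative algebra over 'k on the letters gen, realised as
  functions from words to coefficients (formal series); product = concatenation
  convolution. The free Lie algebra is the Lie subalgebra generated by the letters.\<close>
type_synonym 'k nc = "gen list \<Rightarrow> 'k"

definition nc_mul :: "'k::field nc \<Rightarrow> 'k nc \<Rightarrow> 'k nc" where
  "nc_mul p q = (\<lambda>w. \<Sum>i\<le>length w. p (take i w) * q (drop i w))"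

definition nc_add :: "'k::field nc \<Rightarrow> 'k nc \<Rightarrow> 'k nc" where
  "nc_add p q = (\<lambda>w. p w + q w)"

definition nc_smult :: "'k::field \<Rightarrow> 'k nc \<Rightarrow> 'k nc" where
  "nc_smult c p = (\<lambda>w. c * p w)"

definition nc_bracket :: "'k::field nc \<Rightarrow> 'k nc \<Rightarrow> 'k nc" where
  "nc_bracket p q = (\<lambda>w. nc_mul p q w - nc_mul q p w)"

definition letter :: "gen \<Rightarrow> 'k::field nc" where
  "letter a = (\<lambda>w. if w = [a] then 1 else 0)"

definition gens :: "nat \<Rightarrow> gen set" where
  "gens g = {GX k | k. k \<in> {1..g}} \<union> {GY k | k. k \<in> {1..g}} \<union> {GT}"

inductive_set free_lie :: "nat \<Rightarrow> 'k::field nc set" for g where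
  fl_gen: "a \<in> gens g \<Longrightarrow> letter a \<in> free_lie g"
| fl_zero: "(\<lambda>_. 0) \<in> free_lie g"
| fl_add: "p \<in> free_lie g \<Longrightarrow> q \<in> free_lie g \<Longrightarrow> nc_add p q \<in> free_lie g"
| fl_smult: "p \<in> free_lie g \<Longrightarrow> nc_smult c p \<in> free_lie g"
| fl_bracket: "p \<in> free_lie g \<Longrightarrow> q \<in> free_lie g \<Longrightarrow> nc_bracket p q \<in> free_lie g"

definition rels :: "nat \<Rightarrow> 'k::field nc set" where
  "rels g = {nc_bracket (letter GT) (letter a) | a. a \<in> gens g} \<union>
     {nc_add (\<lambda>w. \<Sum>k\<in>{1..g}. nc_bracket (letter (GX k)) (letter (GY k)) w)
             (nc_smult (2 - 2 * of_nat g) (letter GT))}"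

inductive_set rel_ideal :: "nat \<Rightarrow> 'k::field nc set" for g where
  ri_rel: "r \<in> rels g \<Longrightarrow> r \<in> rel_ideal g"
| ri_zero: "(\<lambda>_. 0) \<in> rel_ideal g"
| ri_add: "p \<in> rel_ideal g \<Longrightarrow> q \<in> rel_ideal g \<Longrightarrow> nc_add p q \<in> rel_ideal g"
| ri_smult: "p \<in> rel_ideal g \<Longrightarrow> nc_smult c p \<in> rel_ideal g"
| ri_bracket: "p \<in> rel_ideal g \<Longrightarrow> q \<in> free_lie g \<Longrightarrow> nc_bracket p q \<in> rel_ideal g"

text \<open>Representatives (in the free Lie algebra) of central elements of
  t_(g)(1) = free_lie g / rel_ideal g.\<close>
definition center_reps :: "nat \<Rightarrow> 'k::field nc set" where
  "center_reps g = {u \<in> free_lie g. \<forall>v \<in> free_lie g. nc_bracket u v \<in> rel_ideal g}"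

end

theory Submission
  imports Defs "HOL-Library.Nat_Bijection"
begin

text \<open>
  Let \<open>t\<^sub>(\<^sub>g\<^sub>)(1)\<close> act on the free associative algebra on letters t, x_k^(n), y_k^(n)
  (2 <= k <= g, n >= 0): x_1 acts as the derivation D with D x_k^(n) = x_k^(n+1),
  D y_k^(n) = y_k^(n+1) and D t = - sum_{k>=2} [x_k^(0), y_k^(0)]; y_1, x_k, y_k act by left
  multiplication with t, x_k^(0), y_k^(0); and t acts as 0. The defining relation holds because
  [D, L_t] = L_(D t). By induction every Lie element p acts as c D + L_m, with m in the Lie
  algebra generated by the new letters, and p = c x_1 + Psi m modulo the relations and t, where
  the homomorphism Psi sends x_k^(n), y_k^(n), t to (ad x_1)^n x_k, (ad x_1)^n y_k, y_1; the
  point is that Psi (D m) = [x_1, Psi m] modulo the relations and t.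

  If p is central, then [p, x_2] and [p, y_2] act as zero. Applied to 1 this gives
  c x_2^(1) + [m, x_2^(0)] = 0 and [m, y_2^(0)] = 0, hence c = 0 and m = 0, so p is a multiple
  of t modulo the relations. That t itself is not in the ideal of relations is seen in degrees
  at most 2. The argument works over any field.
\<close>

section \<open>Finitely supported series\<close>

definition nc_one :: "'k::field nc" where
  "nc_one = (\<lambda>w. if w = [] then 1 else 0)"

definition nc_monom :: "gen list \<Rightarrow> 'k::field nc" where
  "nc_monom u = (\<lambda>w. if w = u then 1 else 0)"

definition nc_supp :: "'k::field nc \<Rightarrow> gen list set" where
  "nc_supp p = {w. p w \<noteq> 0}"

abbreviation nc_finite :: "'k::field nc \<Rightarrow> bool" where
  "nc_finite p \<equiv> finite (nc_supp p)"

lemma nc_mul_assoc: "nc_mul (nc_mul p q) r = nc_mul p (nc_mul q r)"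
proof (rule ext)
  fix w :: "gen list"
  define n where "n = length w"
  define G where "G = (\<lambda>j l. p (take j w) * q (take l (drop j w)) * r (drop (j + l) w))"
  have "nc_mul (nc_mul p q) r w = (\<Sum>k\<le>n. \<Sum>j\<le>k. G j (k - j))"
    unfolding nc_mul_def G_def n_def
    by (auto simp: sum_distrib_right drop_take min_def intro!: sum.cong)
  also have "\<dots> = (\<Sum>(j,l)\<in>{(j,l). j + l \<le> n}. G j l)"
    by (rule sum.triangle_reindex_eq[symmetric])
  also have "{(j,l). j + l \<le> n} = Sigma {..n} (\<lambda>j. {..n-j})" by auto
  also have "(\<Sum>(j,l)\<in>Sigma {..n} (\<lambda>j. {..n-j}). G j l) = (\<Sum>j\<le>n. \<Sum>l\<le>n-j. G j l)"
    by (rule sum.Sigma[symmetric]) auto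
  also have "\<dots> = nc_mul p (nc_mul q r) w"
    unfolding nc_mul_def G_def n_def
    by (auto simp: sum_distrib_left mult.assoc add.commute intro!: sum.cong)
  finally show "nc_mul (nc_mul p q) r w = nc_mul p (nc_mul q r) w" .
qed

lemma nc_mul_add_left: "nc_mul (\<lambda>w. p w + q w) r = (\<lambda>w. nc_mul p r w + nc_mul q r w)"
  unfolding nc_mul_def by (auto simp: algebra_simps sum.distrib)

lemma nc_mul_add_right: "nc_mul r (\<lambda>w. p w + q w) = (\<lambda>w. nc_mul r p w + nc_mul r q w)"
  unfolding nc_mul_def by (auto simp: algebra_simps sum.distrib)

lemma nc_mul_diff_left: "nc_mul (\<lambda>w. p w - q w) r = (\<lambda>w. nc_mul p r w - nc_mul q r w)"
  unfolding nc_mul_def by (auto simp: algebra_simps sum_subtractf)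

lemma nc_mul_diff_right: "nc_mul r (\<lambda>w. p w - q w) = (\<lambda>w. nc_mul r p w - nc_mul r q w)"
  unfolding nc_mul_def by (auto simp: algebra_simps sum_subtractf)

lemma nc_mul_smult_left: "nc_mul (\<lambda>w. c * p w) r = (\<lambda>w. c * nc_mul p r w)"
  unfolding nc_mul_def by (auto simp: algebra_simps sum_distrib_left)

lemma nc_mul_smult_right: "nc_mul r (\<lambda>w. c * p w) = (\<lambda>w. c * nc_mul r p w)"
  unfolding nc_mul_def by (auto simp: algebra_simps sum_distrib_left)

lemma nc_mul_zero_left: "nc_mul (\<lambda>w. 0) r = (\<lambda>w. 0)"
  unfolding nc_mul_def by auto

lemma nc_mul_zero_right: "nc_mul r (\<lambda>w. 0) = (\<lambda>w. 0)"
  unfolding nc_mul_def by auto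

lemma nc_mul_sum_left:
  "nc_mul (\<lambda>w. \<Sum>u\<in>S. c u * X u w) q = (\<lambda>w. \<Sum>u\<in>S. c u * nc_mul (X u) q w)"
  unfolding nc_mul_def
  by (auto simp: sum_distrib_right sum_distrib_left mult.assoc intro: sum.swap)

lemma nc_mul_sum_right:
  "nc_mul q (\<lambda>w. \<Sum>u\<in>S. c u * X u w) = (\<lambda>w. \<Sum>u\<in>S. c u * nc_mul q (X u) w)"
  unfolding nc_mul_def
  by (auto simp: sum_distrib_right sum_distrib_left mult.assoc mult.left_commute intro: sum.swap)

lemma nc_mul_Nil: "nc_mul p q [] = p [] * q []"
  by (simp add: nc_mul_def)

lemma nc_mul_singleton: "nc_mul p q [a] = p [] * q [a] + p [a] * q []"
  by (simp add: nc_mul_def)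

lemma nc_mul_doubleton: "nc_mul p q [a, b] = p [] * q [a, b] + p [a] * q [b] + p [a, b] * q []"
  by (simp add: nc_mul_def)

lemma nc_mul_monom_left:
  "nc_mul (nc_monom u) q w = (if take (length u) w = u then q (drop (length u) w) else 0)"
proof -
  have "nc_mul (nc_monom u) q w = (\<Sum>i\<le>length w. if i = length u then
      (if take (length u) w = u then q (drop (length u) w) else 0) else 0)"
    unfolding nc_mul_def nc_monom_def by (rule sum.cong) auto
  also have "\<dots> = (if take (length u) w = u then q (drop (length u) w) else 0)"
    by (auto dest: arg_cong[where f=length])
  finally show ?thesis .
qed

lemma nc_mul_monom_right:
  "nc_mul q (nc_monom u) w = (if length u \<le> length w \<and> drop (length w - length u) w = u
     then q (take (length w - length u) w) else 0)"
proof -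
  have "nc_mul q (nc_monom u) w = (\<Sum>i\<le>length w. if i = length w - length u then
      (if length u \<le> length w \<and> drop (length w - length u) w = u
       then q (take (length w - length u) w) else 0) else 0)"
    unfolding nc_mul_def nc_monom_def by (rule sum.cong) auto
  also have "\<dots> = (if length u \<le> length w \<and> drop (length w - length u) w = u
      then q (take (length w - length u) w) else 0)"
    by auto
  finally show ?thesis .
qed

lemma nc_one_eq_monom: "nc_one = nc_monom []"
  unfolding nc_one_def nc_monom_def by auto

lemma letter_eq_monom: "letter a = nc_monom [a]"
  unfolding letter_def nc_monom_def by auto

lemma nc_mul_one_left [simp]: "nc_mul nc_one q = q"
  by (rule ext) (simp add: nc_one_eq_monom nc_mul_monom_left)

lemma nc_mul_one_right [simp]: "nc_mul q nc_one = q"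
  by (rule ext) (simp add: nc_one_eq_monom nc_mul_monom_right)

lemma nc_monom_append: "nc_monom (u @ v) = nc_mul (nc_monom u) (nc_monom v)"
  by (rule ext, unfold nc_mul_monom_left)
     (auto simp: nc_monom_def append_eq_conv_conj, metis append_take_drop_id)

lemma nc_monom_Cons: "nc_monom (a # v) = nc_mul (letter a) (nc_monom v)"
  using nc_monom_append[of "[a]" v] by (simp add: letter_eq_monom)

lemma nc_finite_monom: "nc_finite (nc_monom u)"
  by (rule finite_subset[of _ "{u}"]) (auto simp: nc_supp_def nc_monom_def)

lemma nc_finite_letter: "nc_finite (letter a)"
  by (simp add: letter_eq_monom nc_finite_monom)

lemma nc_finite_one: "nc_finite nc_one"
  by (simp add: nc_one_eq_monom nc_finite_monom)

lemma nc_finite_zero: "nc_finite (\<lambda>w. 0)"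
  by (simp add: nc_supp_def)

lemma nc_finite_add: "nc_finite p \<Longrightarrow> nc_finite q \<Longrightarrow> nc_finite (\<lambda>w. p w + q w)"
  by (rule finite_subset[of _ "nc_supp p \<union> nc_supp q"]) (auto simp: nc_supp_def)

lemma nc_finite_diff: "nc_finite p \<Longrightarrow> nc_finite q \<Longrightarrow> nc_finite (\<lambda>w. p w - q w)"
  by (rule finite_subset[of _ "nc_supp p \<union> nc_supp q"]) (auto simp: nc_supp_def)

lemma nc_finite_smult: "nc_finite p \<Longrightarrow> nc_finite (\<lambda>w. c * p w)"
  by (rule finite_subset[of _ "nc_supp p"]) (auto simp: nc_supp_def)

lemma nc_finite_sum:
  "finite S \<Longrightarrow> (\<And>u. u \<in> S \<Longrightarrow> nc_finite (X u)) \<Longrightarrow> nc_finite (\<lambda>w. \<Sum>u\<in>S. c u * X u w)"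
  by (rule finite_subset[of _ "\<Union>u\<in>S. nc_supp (X u)"])
     (auto simp: nc_supp_def intro: sum.neutral)

lemma nc_finite_mul:
  assumes "nc_finite p" "nc_finite q"
  shows "nc_finite (nc_mul p q)"
proof (rule finite_subset)
  show "nc_supp (nc_mul p q) \<subseteq> (\<lambda>(u,v). u @ v) ` (nc_supp p \<times> nc_supp q)"
  proof
    fix w assume "w \<in> nc_supp (nc_mul p q)"
    then obtain i where "p (take i w) * q (drop i w) \<noteq> 0"
      unfolding nc_supp_def nc_mul_def by (meson sum.neutral mem_Collect_eq)
    then show "w \<in> (\<lambda>(u,v). u @ v) ` (nc_supp p \<times> nc_supp q)"
      by (auto simp: nc_supp_def image_iff) (metis append_take_drop_id)
  qed
qed (use assms in auto)

lemma nc_finite_bracket: "nc_finite p \<Longrightarrow> nc_finite q \<Longrightarrow> nc_finite (nc_bracket p q)"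
  unfolding nc_bracket_def by (intro nc_finite_diff nc_finite_mul)

definition nc_linext :: "(gen list \<Rightarrow> 'k::field nc) \<Rightarrow> 'k nc \<Rightarrow> 'k nc" where
  "nc_linext F p = (\<lambda>v. \<Sum>w\<in>nc_supp p. p w * F w v)"

lemma nc_linext_superset:
  assumes "finite T" "nc_supp p \<subseteq> T"
  shows "nc_linext F p x = (\<Sum>w\<in>T. p w * F w x)"
  unfolding nc_linext_def
  by (rule sum.mono_neutral_left) (use assms in \<open>auto simp: nc_supp_def\<close>)

lemma nc_linext_sum:
  assumes S: "finite S" and Y: "\<And>u. u \<in> S \<Longrightarrow> nc_finite (Y u)"
  shows "nc_linext F (\<lambda>w. \<Sum>u\<in>S. c u * Y u w) = (\<lambda>x. \<Sum>u\<in>S. c u * nc_linext F (Y u) x)"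
proof (rule ext)
  fix x
  define T where "T = (\<Union>u\<in>S. nc_supp (Y u))"
  have T: "finite T" using S Y by (auto simp: T_def)
  have "nc_linext F (\<lambda>w. \<Sum>u\<in>S. c u * Y u w) x = (\<Sum>w\<in>T. (\<Sum>u\<in>S. c u * Y u w) * F w x)"
    by (rule nc_linext_superset[OF T]) (auto simp: nc_supp_def T_def intro: sum.neutral)
  also have "\<dots> = (\<Sum>u\<in>S. c u * (\<Sum>w\<in>T. Y u w * F w x))"
    by (simp add: sum_distrib_right sum_distrib_left mult.assoc sum.swap[of _ T])
  also have "\<dots> = (\<Sum>u\<in>S. c u * nc_linext F (Y u) x)"
    by (rule sum.cong[OF refl], subst nc_linext_superset[OF T]) (auto simp: T_def)
  finally show "nc_linext F (\<lambda>w. \<Sum>u\<in>S. c u * Y u w) x = (\<Sum>u\<in>S. c u * nc_linext F (Y u) x)" .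
qed

lemma nc_linext_add:
  "nc_finite p \<Longrightarrow> nc_finite q \<Longrightarrow>
   nc_linext F (\<lambda>w. p w + q w) = (\<lambda>x. nc_linext F p x + nc_linext F q x)"
  by (rule ext, subst (1 2 3) nc_linext_superset[of "nc_supp p \<union> nc_supp q"])
     (auto simp: nc_supp_def algebra_simps sum.distrib)

lemma nc_linext_diff:
  "nc_finite p \<Longrightarrow> nc_finite q \<Longrightarrow>
   nc_linext F (\<lambda>w. p w - q w) = (\<lambda>x. nc_linext F p x - nc_linext F q x)"
  by (rule ext, subst (1 2 3) nc_linext_superset[of "nc_supp p \<union> nc_supp q"])
     (auto simp: nc_supp_def algebra_simps sum_subtractf)

lemma nc_linext_smult:
  "nc_finite p \<Longrightarrow> nc_linext F (\<lambda>w. c * p w) = (\<lambda>x. c * nc_linext F p x)"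
  by (rule ext, subst (1 2) nc_linext_superset[of "nc_supp p"])
     (auto simp: nc_supp_def algebra_simps sum_distrib_left)

lemma nc_linext_zero: "nc_linext F (\<lambda>w. 0) = (\<lambda>x. 0)"
  by (simp add: nc_linext_def nc_supp_def)

lemma nc_linext_monom: "nc_linext F (nc_monom u) = F u"
  by (rule ext, subst nc_linext_superset[of "{u}"]) (auto simp: nc_supp_def nc_monom_def)

lemma nc_linext_monom_id: "nc_finite p \<Longrightarrow> nc_linext nc_monom p = p"
  by (rule ext, subst nc_linext_superset[of "nc_supp p"])
     (auto simp: nc_supp_def nc_monom_def if_distrib cong: if_cong)

lemma nc_linext_fun_add:
  "nc_linext (\<lambda>w x. F w x + G w x) p = (\<lambda>x. nc_linext F p x + nc_linext G p x)"
  by (auto simp: nc_linext_def algebra_simps sum.distrib)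

lemma nc_linext_fun_zero: "nc_linext (\<lambda>w x. 0) p = (\<lambda>x. 0)"
  by (auto simp: nc_linext_def)

lemma nc_finite_linext: "nc_finite p \<Longrightarrow> (\<And>w. nc_finite (F w)) \<Longrightarrow> nc_finite (nc_linext F p)"
  unfolding nc_linext_def by (rule nc_finite_sum) auto

lemma nc_mul_linext_left: "nc_mul (nc_linext G p) q = nc_linext (\<lambda>u. nc_mul (G u) q) p"
  unfolding nc_linext_def by (rule nc_mul_sum_left)

lemma nc_mul_linext_right: "nc_mul q (nc_linext G p) = nc_linext (\<lambda>u. nc_mul q (G u)) p"
  unfolding nc_linext_def by (rule nc_mul_sum_right)

lemma nc_supp_mul_monom: "nc_supp (nc_mul (nc_monom u) q) = (\<lambda>v. u @ v) ` nc_supp q"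
  by (auto simp: nc_supp_def nc_mul_monom_left image_iff append_eq_conv_conj)
     (metis append_take_drop_id)

lemma nc_linext_mul_monom: "nc_linext F (nc_mul (nc_monom u) q) = nc_linext (\<lambda>v. F (u @ v)) q"
proof (rule ext)
  fix x
  have "nc_linext F (nc_mul (nc_monom u) q) x =
      (\<Sum>w\<in>(\<lambda>v. u @ v) ` nc_supp q. nc_mul (nc_monom u) q w * F w x)"
    by (simp add: nc_linext_def nc_supp_mul_monom)
  also have "\<dots> = (\<Sum>v\<in>nc_supp q. nc_mul (nc_monom u) q (u @ v) * F (u @ v) x)"
    by (subst sum.reindex) (auto simp: inj_on_def)
  also have "\<dots> = nc_linext (\<lambda>v. F (u @ v)) q x"
    by (simp add: nc_linext_def nc_mul_monom_left)
  finally show "nc_linext F (nc_mul (nc_monom u) q) x = nc_linext (\<lambda>v. F (u @ v)) q x" .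
qed

lemma nc_linext_mul:
  assumes p: "nc_finite p" and q: "nc_finite q"
  shows "nc_linext F (nc_mul p q) = nc_linext (\<lambda>u. nc_linext (\<lambda>v. F (u @ v)) q) p"
proof -
  have "nc_mul p q = nc_mul (nc_linext nc_monom p) q"
    by (simp add: nc_linext_monom_id[OF p])
  also have "\<dots> = (\<lambda>w. \<Sum>u\<in>nc_supp p. p u * nc_mul (nc_monom u) q w)"
    unfolding nc_linext_def by (rule nc_mul_sum_left)
  finally have "nc_linext F (nc_mul p q) = (\<lambda>x. \<Sum>u\<in>nc_supp p. p u * nc_linext F (nc_mul (nc_monom u) q) x)"
    using p q by (simp add: nc_linext_sum nc_finite_mul nc_finite_monom)
  then show ?thesis
    by (simp only: nc_linext_mul_monom) (simp only: nc_linext_def)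
qed

definition nc_linear :: "('k::field nc \<Rightarrow> 'k nc) \<Rightarrow> bool" where
  "nc_linear T \<longleftrightarrow>
     (\<forall>p q. nc_finite p \<longrightarrow> nc_finite q \<longrightarrow> T (\<lambda>w. p w + q w) = (\<lambda>w. T p w + T q w)) \<and>
     (\<forall>p c. nc_finite p \<longrightarrow> T (\<lambda>w. c * p w) = (\<lambda>w. c * T p w)) \<and>
     (\<forall>p. nc_finite p \<longrightarrow> nc_finite (T p))"

lemma nc_linear_add:
  "nc_linear T \<Longrightarrow> nc_finite p \<Longrightarrow> nc_finite q \<Longrightarrow> T (\<lambda>w. p w + q w) = (\<lambda>w. T p w + T q w)"
  unfolding nc_linear_def by blast

lemma nc_linear_smult: "nc_linear T \<Longrightarrow> nc_finite p \<Longrightarrow> T (\<lambda>w. c * p w) = (\<lambda>w. c * T p w)"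
  unfolding nc_linear_def by blast

lemma nc_linear_finite: "nc_linear T \<Longrightarrow> nc_finite p \<Longrightarrow> nc_finite (T p)"
  unfolding nc_linear_def by blast

lemma nc_linear_zero: "nc_linear T \<Longrightarrow> T (\<lambda>w. 0) = (\<lambda>w. 0)"
  using nc_linear_smult[of T "\<lambda>w. 0" 0] by (simp add: nc_finite_zero)

lemma nc_linear_sum:
  assumes T: "nc_linear T" and S: "finite S" and G: "\<And>v. v \<in> S \<Longrightarrow> nc_finite (G v)"
  shows "T (\<lambda>w. \<Sum>v\<in>S. c v * G v w) = (\<lambda>w. \<Sum>v\<in>S. c v * T (G v) w)"
  using S G
proof (induction S rule: finite_induct)
  case empty
  then show ?case by (simp add: nc_linear_zero[OF T])
next
  case (insert x F)
  have "T (\<lambda>w. \<Sum>v\<in>insert x F. c v * G v w) = T (\<lambda>w. c x * G x w + (\<Sum>v\<in>F. c v * G v w))"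
    using insert by simp
  also have "\<dots> = (\<lambda>w. T (\<lambda>w. c x * G x w) w + T (\<lambda>w. \<Sum>v\<in>F. c v * G v w) w)"
    using insert by (intro nc_linear_add[OF T] nc_finite_smult nc_finite_sum) auto
  also have "\<dots> = (\<lambda>w. \<Sum>v\<in>insert x F. c v * T (G v) w)"
    using insert by (simp add: nc_linear_smult[OF T])
  finally show ?case .
qed

lemma nc_linear_linext:
  "nc_linear T \<Longrightarrow> nc_finite q \<Longrightarrow> (\<And>v. nc_finite (G v)) \<Longrightarrow>
   T (nc_linext G q) = nc_linext (\<lambda>v. T (G v)) q"
  unfolding nc_linext_def by (rule nc_linear_sum) auto

lemma nc_linear_diff:
  "nc_linear T \<Longrightarrow> nc_finite p \<Longrightarrow> nc_finite q \<Longrightarrow> T (\<lambda>w. p w - q w) = (\<lambda>w. T p w - T q w)"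
  using nc_linear_add[of T p "\<lambda>w. (-1) * q w"] nc_linear_smult[of T q "-1"] nc_finite_smult[of q "-1"]
  by simp

lemma nc_linear_id: "nc_linear (\<lambda>f. f)"
  unfolding nc_linear_def by simp

lemma nc_linear_comp: "nc_linear S \<Longrightarrow> nc_linear T \<Longrightarrow> nc_linear (\<lambda>f. S (T f))"
  unfolding nc_linear_def by simp

lemma nc_linear_zero_map: "nc_linear (\<lambda>f w. 0)"
  unfolding nc_linear_def by (simp add: nc_finite_zero)

lemma nc_linear_mul_left: "nc_finite b \<Longrightarrow> nc_linear (nc_mul b)"
  unfolding nc_linear_def by (simp add: nc_mul_add_right nc_mul_smult_right nc_finite_mul)

lemma nc_linear_linext_map: "(\<And>w. nc_finite (F w)) \<Longrightarrow> nc_linear (nc_linext F)"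
  unfolding nc_linear_def by (simp add: nc_linext_add nc_linext_smult nc_finite_linext)

lemma nc_bracket_antisym: "nc_bracket q p = (\<lambda>w. - nc_bracket p q w)"
  unfolding nc_bracket_def by auto

lemma nc_bracket_self: "nc_bracket p p = (\<lambda>w. 0)"
  unfolding nc_bracket_def by simp

lemma nc_bracket_add_left:
  "nc_bracket (\<lambda>w. p w + q w) r = (\<lambda>w. nc_bracket p r w + nc_bracket q r w)"
  unfolding nc_bracket_def by (rule ext) (simp add: nc_mul_add_left nc_mul_add_right)

lemma nc_bracket_add_right:
  "nc_bracket r (\<lambda>w. p w + q w) = (\<lambda>w. nc_bracket r p w + nc_bracket r q w)"
  unfolding nc_bracket_def by (rule ext) (simp add: nc_mul_add_left nc_mul_add_right)

lemma nc_bracket_diff_left: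
  "nc_bracket (\<lambda>w. p w - q w) r = (\<lambda>w. nc_bracket p r w - nc_bracket q r w)"
  unfolding nc_bracket_def by (rule ext) (simp add: nc_mul_diff_left nc_mul_diff_right)

lemma nc_bracket_diff_right:
  "nc_bracket r (\<lambda>w. p w - q w) = (\<lambda>w. nc_bracket r p w - nc_bracket r q w)"
  unfolding nc_bracket_def by (rule ext) (simp add: nc_mul_diff_left nc_mul_diff_right)

lemma nc_bracket_smult_left: "nc_bracket (\<lambda>w. c * p w) r = (\<lambda>w. c * nc_bracket p r w)"
  unfolding nc_bracket_def
  by (rule ext) (simp add: nc_mul_smult_left nc_mul_smult_right algebra_simps)

lemma nc_bracket_smult_right: "nc_bracket r (\<lambda>w. c * p w) = (\<lambda>w. c * nc_bracket r p w)"
  unfolding nc_bracket_def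
  by (rule ext) (simp add: nc_mul_smult_left nc_mul_smult_right algebra_simps)

lemma nc_bracket_zero_right: "nc_bracket r (\<lambda>w. 0) = (\<lambda>w. 0)"
  unfolding nc_bracket_def by (simp add: nc_mul_zero_left nc_mul_zero_right)

lemma nc_bracket_jacobi:
  "nc_bracket x (nc_bracket y z) =
   (\<lambda>w. nc_bracket (nc_bracket x y) z w + nc_bracket y (nc_bracket x z) w)"
  unfolding nc_bracket_def
  by (rule ext) (simp add: nc_mul_diff_left nc_mul_diff_right nc_mul_assoc)

section \<open>Lie algebras generated by letters\<close>

inductive_set lie_span :: "gen set \<Rightarrow> 'k::field nc set" for A where
  lie_span_letter: "a \<in> A \<Longrightarrow> letter a \<in> lie_span A"
| lie_span_zero: "(\<lambda>_. 0) \<in> lie_span A"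
| lie_span_add: "p \<in> lie_span A \<Longrightarrow> q \<in> lie_span A \<Longrightarrow> (\<lambda>w. p w + q w) \<in> lie_span A"
| lie_span_smult: "p \<in> lie_span A \<Longrightarrow> (\<lambda>w. c * p w) \<in> lie_span A"
| lie_span_bracket: "p \<in> lie_span A \<Longrightarrow> q \<in> lie_span A \<Longrightarrow> nc_bracket p q \<in> lie_span A"

lemma free_lie_eq_lie_span: "free_lie g = lie_span (gens g)"
proof (intro set_eqI iffI)
  fix p :: "'k::field nc"
  show "p \<in> free_lie g \<Longrightarrow> p \<in> lie_span (gens g)"
    by (induction rule: free_lie.induct)
       (auto simp: nc_add_def nc_smult_def intro: lie_span.intros)
  show "p \<in> lie_span (gens g) \<Longrightarrow> p \<in> free_lie g"
    by (induction rule: lie_span.induct)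
       (auto intro: free_lie.intros simp flip: nc_add_def nc_smult_def)
qed

lemma lie_span_finite: "p \<in> lie_span A \<Longrightarrow> nc_finite p"
  by (induction rule: lie_span.induct)
     (auto intro: nc_finite_letter nc_finite_zero nc_finite_add nc_finite_smult nc_finite_bracket)

lemma lie_span_Nil: "p \<in> lie_span A \<Longrightarrow> p [] = 0"
  by (induction rule: lie_span.induct) (auto simp: letter_def nc_bracket_def nc_mul_Nil)

lemma lie_span_sum:
  "finite S \<Longrightarrow> (\<And>k. k \<in> S \<Longrightarrow> X k \<in> lie_span A) \<Longrightarrow> (\<lambda>w. \<Sum>k\<in>S. c k * X k w) \<in> lie_span A"
  by (induction S rule: finite_induct) (simp_all add: lie_span.intros)

lemma free_lie_finite: "p \<in> free_lie g \<Longrightarrow> nc_finite p"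
  by (simp add: free_lie_eq_lie_span lie_span_finite)

section \<open>The ideal of relations\<close>

lemma rel_ideal_finite: "p \<in> rel_ideal g \<Longrightarrow> nc_finite p"
proof (induction rule: rel_ideal.induct)
  case (ri_rel r)
  then show ?case
    by (auto simp: rels_def nc_add_def nc_smult_def
        intro!: nc_finite_bracket nc_finite_letter nc_finite_add nc_finite_smult
          nc_finite_sum[where c="\<lambda>_. 1", simplified])
qed (auto simp: nc_add_def nc_smult_def
      intro: nc_finite_zero nc_finite_add nc_finite_smult nc_finite_bracket free_lie_finite)

lemma rel_ideal_add:
  "p \<in> rel_ideal g \<Longrightarrow> q \<in> rel_ideal g \<Longrightarrow> (\<lambda>w. p w + q w) \<in> rel_ideal g"
  using ri_add[of p g q] by (simp add: nc_add_def)

lemma rel_ideal_smult: "p \<in> rel_ideal g \<Longrightarrow> (\<lambda>w. c * p w) \<in> rel_ideal g"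
  using ri_smult[of p g c] by (simp add: nc_smult_def)

lemma rel_ideal_diff:
  "p \<in> rel_ideal g \<Longrightarrow> q \<in> rel_ideal g \<Longrightarrow> (\<lambda>w. p w - q w) \<in> rel_ideal g"
  using rel_ideal_add[of p g "\<lambda>w. (-1) * q w"] rel_ideal_smult[of q g "-1"] by simp

lemma bracket_letter_GT_in_rel_ideal:
  "q \<in> free_lie g \<Longrightarrow> nc_bracket (letter GT) q \<in> (rel_ideal g :: 'k::field nc set)"
proof (induction rule: free_lie.induct)
  case (fl_gen a)
  then show ?case by (intro ri_rel) (auto simp: rels_def)
next
  case fl_zero
  then show ?case by (simp add: nc_bracket_zero_right ri_zero)
next
  case (fl_add p q)
  then show ?case by (simp add: nc_add_def nc_bracket_add_right rel_ideal_add)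
next
  case (fl_smult p c)
  then show ?case by (simp add: nc_smult_def nc_bracket_smult_right rel_ideal_smult)
next
  case (fl_bracket p q)
  have "nc_bracket (letter GT) (nc_bracket p q) =
     (\<lambda>w. nc_bracket (nc_bracket (letter GT) p) q w - nc_bracket (nc_bracket (letter GT) q) p w)"
    by (subst nc_bracket_jacobi) (simp add: nc_bracket_antisym[of p "nc_bracket (letter GT) q"])
  also have "\<dots> \<in> rel_ideal g"
    using fl_bracket ri_bracket[of "nc_bracket (letter GT) p" g q]
      ri_bracket[of "nc_bracket (letter GT) q" g p]
    by (intro rel_ideal_diff) auto
  finally show ?case .
qed

text \<open>A bracket of a series satisfying the first two conjuncts with a Lie element (which has
  no constant term) vanishes in degrees at most 2.\<close>
lemma rel_ideal_low_degree:
  assumes g: "g \<ge> 1" and p: "p \<in> rel_ideal g"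
  shows "(p :: 'k::field nc) [] = 0 \<and> (\<forall>a. a \<noteq> GT \<longrightarrow> p [a] = 0) \<and>
    p [GT] + (2 * of_nat g - 2) * p [GX 1, GY 1] = 0"
  using p
proof (induction rule: rel_ideal.induct)
  case (ri_rel r)
  have "(\<Sum>k\<in>{1..g}. nc_bracket (letter (GX k)) (letter (GY k)) [GX 1, GY 1]) =
        (\<Sum>k\<in>{1..g}. if k = 1 then (1::'k) else 0)"
    by (rule sum.cong) (auto simp: nc_bracket_def nc_mul_doubleton letter_def)
  also have "\<dots> = 1" using g by simp
  finally have "(\<Sum>k\<in>{1..g}. nc_bracket (letter (GX k)) (letter (GY k)) [GX 1, GY 1]) = (1::'k)" .
  with ri_rel show ?case
    by (auto simp: rels_def nc_add_def nc_smult_def nc_bracket_def nc_mul_Nil nc_mul_singleton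
        nc_mul_doubleton letter_def algebra_simps)
next
  case (ri_add p q)
  define C :: 'k where "C = 2 * of_nat g - 2"
  have "p [GT] + q [GT] + C * (p [GX 1, GY 1] + q [GX 1, GY 1]) =
     (p [GT] + C * p [GX 1, GY 1]) + (q [GT] + C * q [GX 1, GY 1])"
    by (simp add: algebra_simps)
  with ri_add.IH show ?case by (simp add: nc_add_def C_def)
next
  case (ri_smult p c)
  then show ?case
    by (simp add: nc_smult_def) (metis distrib_left mult.left_commute mult_zero_right)
next
  case (ri_bracket p q)
  have "q [] = 0"
    using ri_bracket.hyps(2) by (simp add: free_lie_eq_lie_span lie_span_Nil)
  with ri_bracket.IH show ?case
    by (auto simp: nc_bracket_def nc_mul_Nil nc_mul_singleton nc_mul_doubleton)
qed simp

lemma letter_GT_notin_rel_ideal: "g \<ge> 1 \<Longrightarrow> (letter GT :: 'k::field nc) \<notin> rel_ideal g"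
  using rel_ideal_low_degree[of g "letter GT"] by (auto simp: letter_def)

lemma center_reps_if_congruent_t:
  fixes u :: "'k::field nc"
  assumes u: "u \<in> free_lie g" and c: "nc_add u (nc_smult (- c) (letter GT)) \<in> rel_ideal g"
  shows "u \<in> center_reps g"
  unfolding center_reps_def
proof (intro CollectI conjI ballI u)
  fix v :: "'k nc" assume v: "v \<in> free_lie g"
  define r where "r = nc_add u (nc_smult (- c) (letter GT))"
  have "u = (\<lambda>w. r w + c * letter GT w)"
    by (auto simp: r_def nc_add_def nc_smult_def)
  then have "nc_bracket u v = (\<lambda>w. nc_bracket r v w + c * nc_bracket (letter GT) v w)"
    by (simp add: nc_bracket_add_left nc_bracket_smult_left)
  also have "\<dots> \<in> rel_ideal g"
    using c v by (intro rel_ideal_add rel_ideal_smult ri_bracket bracket_letter_GT_in_rel_ideal)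
      (auto simp: r_def)
  finally show "nc_bracket u v \<in> rel_ideal g" .
qed

definition rel_ideal_plus_t :: "nat \<Rightarrow> 'k::field nc set" where
  "rel_ideal_plus_t g = {q. \<exists>c. (\<lambda>w. q w - c * letter GT w) \<in> rel_ideal g}"

lemma rel_ideal_plus_t_zero: "(\<lambda>w. 0) \<in> rel_ideal_plus_t g"
  unfolding rel_ideal_plus_t_def by (auto intro!: exI[of _ 0] ri_zero)

lemma letter_GT_in_rel_ideal_plus_t: "letter GT \<in> rel_ideal_plus_t g"
  unfolding rel_ideal_plus_t_def by (auto intro!: exI[of _ 1] ri_zero)

lemma rel_ideal_plus_t_add:
  assumes "p \<in> rel_ideal_plus_t g" "q \<in> rel_ideal_plus_t g"
  shows "(\<lambda>w. p w + q w) \<in> rel_ideal_plus_t g"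
proof -
  obtain c d where "(\<lambda>w. p w - c * letter GT w) \<in> rel_ideal g"
    "(\<lambda>w. q w - d * letter GT w) \<in> rel_ideal g"
    using assms unfolding rel_ideal_plus_t_def by blast
  from rel_ideal_add[OF this] show ?thesis
    unfolding rel_ideal_plus_t_def by (auto intro!: exI[of _ "c + d"] simp: algebra_simps)
qed

lemma rel_ideal_plus_t_smult:
  assumes "p \<in> rel_ideal_plus_t g"
  shows "(\<lambda>w. a * p w) \<in> rel_ideal_plus_t g"
proof -
  obtain c where "(\<lambda>w. p w - c * letter GT w) \<in> rel_ideal g"
    using assms unfolding rel_ideal_plus_t_def by blast
  from rel_ideal_smult[OF this, of a] show ?thesis
    unfolding rel_ideal_plus_t_def by (auto intro!: exI[of _ "a * c"] simp: algebra_simps)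
qed

lemma rel_ideal_plus_t_bracket_right:
  assumes p: "p \<in> rel_ideal_plus_t g" and q: "q \<in> free_lie g"
  shows "nc_bracket p q \<in> rel_ideal_plus_t g"
proof -
  obtain c where c: "(\<lambda>w. p w - c * letter GT w) \<in> rel_ideal g"
    using p unfolding rel_ideal_plus_t_def by blast
  have "nc_bracket p q =
      (\<lambda>w. nc_bracket (\<lambda>w. p w - c * letter GT w) q w + c * nc_bracket (letter GT) q w)"
    by (simp add: nc_bracket_diff_left nc_bracket_smult_left)
  also have "\<dots> \<in> rel_ideal g"
    by (intro rel_ideal_add rel_ideal_smult ri_bracket c q bracket_letter_GT_in_rel_ideal)
  finally show ?thesis
    unfolding rel_ideal_plus_t_def by (auto intro!: exI[of _ 0])
qed

lemma rel_ideal_plus_t_bracket_left: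
  "p \<in> rel_ideal_plus_t g \<Longrightarrow> q \<in> free_lie g \<Longrightarrow> nc_bracket q p \<in> rel_ideal_plus_t g"
  using rel_ideal_plus_t_smult[OF rel_ideal_plus_t_bracket_right, of p g q "-1"]
  by (simp add: nc_bracket_antisym[of q p])

lemma sum_brackets_in_rel_ideal_plus_t:
  "(\<lambda>w. \<Sum>k\<in>{1..g}. nc_bracket (letter (GX k)) (letter (GY k)) w)
     \<in> (rel_ideal_plus_t g :: 'k::field nc set)"
proof -
  let ?\<omega> = "\<lambda>w. \<Sum>k\<in>{1..g}. nc_bracket (letter (GX k)) (letter (GY k)) w :: 'k"
  have "nc_add ?\<omega> (nc_smult (2 - 2 * of_nat g) (letter GT)) \<in> rel_ideal g"
    by (rule ri_rel) (simp add: rels_def)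
  also have "nc_add ?\<omega> (nc_smult (2 - 2 * of_nat g) (letter GT)) =
      (\<lambda>w. ?\<omega> w - (2 * of_nat g - 2) * letter GT w)"
    by (rule ext) (simp add: nc_add_def nc_smult_def algebra_simps)
  finally show ?thesis
    unfolding rel_ideal_plus_t_def by blast
qed

section \<open>The derivation D and the lift Psi\<close>

text \<open>Series are indexed by words over \<open>gen\<close>, so the letters t, x_k^(n), y_k^(n) of the
  target algebra are encoded as \<open>GT\<close>, \<open>GX (prod_encode (k, n))\<close>, \<open>GY (prod_encode (k, n))\<close>.\<close>

definition ad_x :: "nat \<Rightarrow> nat \<Rightarrow> gen" where
  "ad_x k n = GX (prod_encode (k, n))"

definition ad_y :: "nat \<Rightarrow> nat \<Rightarrow> gen" where
  "ad_y k n = GY (prod_encode (k, n))"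

definition target_letters :: "nat \<Rightarrow> gen set" where
  "target_letters g =
     {ad_x k n | k n. 2 \<le> k \<and> k \<le> g} \<union> {ad_y k n | k n. 2 \<le> k \<and> k \<le> g} \<union> {GT}"

fun deriv_letter :: "nat \<Rightarrow> gen \<Rightarrow> 'k::field nc" where
  "deriv_letter g (GX j) = letter (GX (prod_encode (fst (prod_decode j), Suc (snd (prod_decode j)))))"
| "deriv_letter g (GY j) = letter (GY (prod_encode (fst (prod_decode j), Suc (snd (prod_decode j)))))"
| "deriv_letter g GT =
     (\<lambda>w. \<Sum>k\<in>{2..g}. (-1) * nc_bracket (letter (ad_x k 0)) (letter (ad_y k 0)) w)"

fun deriv_word :: "nat \<Rightarrow> gen list \<Rightarrow> 'k::field nc" where
  "deriv_word g [] = (\<lambda>_. 0)"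
| "deriv_word g (a # w) =
     (\<lambda>x. nc_mul (deriv_letter g a) (nc_monom w) x + nc_mul (letter a) (deriv_word g w) x)"

definition nc_deriv :: "nat \<Rightarrow> 'k::field nc \<Rightarrow> 'k nc" where
  "nc_deriv g = nc_linext (deriv_word g)"

lemma deriv_letter_ad_x: "deriv_letter g (ad_x k n) = letter (ad_x k (Suc n))"
  by (simp add: ad_x_def)

lemma deriv_letter_ad_y: "deriv_letter g (ad_y k n) = letter (ad_y k (Suc n))"
  by (simp add: ad_y_def)

lemma nc_finite_deriv_letter: "nc_finite (deriv_letter g a)"
proof (cases a)
  case GT
  show ?thesis
    unfolding GT deriv_letter.simps by (rule nc_finite_sum) (auto intro: nc_finite_bracket nc_finite_letter)
qed (auto intro: nc_finite_letter)

lemma nc_finite_deriv_word: "nc_finite (deriv_word g w)"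
  by (induction w)
     (auto intro!: nc_finite_zero nc_finite_add nc_finite_mul nc_finite_deriv_letter
        nc_finite_monom nc_finite_letter)

lemma nc_linear_deriv: "nc_linear (nc_deriv g)"
  unfolding nc_deriv_def by (rule nc_linear_linext_map) (rule nc_finite_deriv_word)

lemmas nc_deriv_add = nc_linear_add[OF nc_linear_deriv]
  and nc_deriv_diff = nc_linear_diff[OF nc_linear_deriv]
  and nc_deriv_smult = nc_linear_smult[OF nc_linear_deriv]
  and nc_deriv_zero = nc_linear_zero[OF nc_linear_deriv]
  and nc_finite_deriv = nc_linear_finite[OF nc_linear_deriv]

lemma deriv_word_append:
  "deriv_word g (u @ v) =
   (\<lambda>x. nc_mul (deriv_word g u) (nc_monom v) x + nc_mul (nc_monom u) (deriv_word g v) x)"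
proof (induction u)
  case Nil
  then show ?case by (simp add: nc_mul_zero_left flip: nc_one_eq_monom)
next
  case (Cons a u)
  then show ?case
    by (rule_tac ext) (simp add: nc_mul_add_left nc_mul_add_right nc_mul_assoc nc_monom_append nc_monom_Cons)
qed

lemma nc_deriv_mul:
  assumes p: "nc_finite p" and q: "nc_finite q"
  shows "nc_deriv g (nc_mul p q) = (\<lambda>x. nc_mul (nc_deriv g p) q x + nc_mul p (nc_deriv g q) x)"
proof -
  have "nc_deriv g (nc_mul p q) = nc_linext (\<lambda>u. nc_linext (\<lambda>v. deriv_word g (u @ v)) q) p"
    unfolding nc_deriv_def by (rule nc_linext_mul[OF p q])
  also have "\<dots> = nc_linext (\<lambda>u x. nc_linext (\<lambda>v. nc_mul (deriv_word g u) (nc_monom v)) q x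
      + nc_linext (\<lambda>v. nc_mul (nc_monom u) (deriv_word g v)) q x) p"
    by (simp only: deriv_word_append nc_linext_fun_add)
  also have "\<dots> = nc_linext (\<lambda>u x. nc_mul (deriv_word g u) q x + nc_mul (nc_monom u) (nc_deriv g q) x) p"
    by (simp only: nc_deriv_def flip: nc_mul_linext_right add: nc_linext_monom_id[OF q])
  also have "\<dots> = (\<lambda>x. nc_mul (nc_deriv g p) q x + nc_mul p (nc_deriv g q) x)"
    by (simp only: nc_linext_fun_add nc_deriv_def flip: nc_mul_linext_left
        add: nc_linext_monom_id[OF p])
  finally show ?thesis .
qed

lemma nc_deriv_letter: "nc_deriv g (letter a) = deriv_letter g a"
  unfolding nc_deriv_def letter_eq_monom nc_linext_monom
  by (simp add: nc_mul_zero_right flip: nc_one_eq_monom)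

lemma nc_deriv_one: "nc_deriv g nc_one = (\<lambda>x. 0)"
  unfolding nc_deriv_def nc_one_eq_monom nc_linext_monom by simp

lemma nc_deriv_bracket:
  "nc_finite p \<Longrightarrow> nc_finite q \<Longrightarrow>
   nc_deriv g (nc_bracket p q) = (\<lambda>x. nc_bracket (nc_deriv g p) q x + nc_bracket p (nc_deriv g q) x)"
  unfolding nc_bracket_def
  by (rule ext) (simp add: nc_deriv_diff nc_finite_mul nc_deriv_mul)

definition ad_x1_pow :: "nat \<Rightarrow> 'k::field nc \<Rightarrow> 'k nc" where
  "ad_x1_pow n p = (nc_bracket (letter (GX 1)) ^^ n) p"

lemma ad_x1_pow_0 [simp]: "ad_x1_pow 0 p = p"
  by (simp add: ad_x1_pow_def)

lemma ad_x1_pow_Suc: "ad_x1_pow (Suc n) p = nc_bracket (letter (GX 1)) (ad_x1_pow n p)"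
  by (simp add: ad_x1_pow_def)

lemma nc_finite_ad_x1_pow: "nc_finite p \<Longrightarrow> nc_finite (ad_x1_pow n p)"
  by (induction n) (simp_all add: ad_x1_pow_Suc nc_finite_bracket nc_finite_letter)

lemma ad_x1_pow_in_free_lie:
  "g \<ge> 1 \<Longrightarrow> p \<in> free_lie g \<Longrightarrow> ad_x1_pow n p \<in> free_lie g"
  by (induction n) (auto simp: ad_x1_pow_Suc gens_def intro!: fl_bracket fl_gen)

fun lift_letter :: "gen \<Rightarrow> 'k::field nc" where
  "lift_letter (GX j) = ad_x1_pow (snd (prod_decode j)) (letter (GX (fst (prod_decode j))))"
| "lift_letter (GY j) = ad_x1_pow (snd (prod_decode j)) (letter (GY (fst (prod_decode j))))"
| "lift_letter GT = letter (GY 1)"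

fun lift_word :: "gen list \<Rightarrow> 'k::field nc" where
  "lift_word [] = nc_one"
| "lift_word (a # w) = nc_mul (lift_letter a) (lift_word w)"

definition nc_lift :: "'k::field nc \<Rightarrow> 'k nc" where
  "nc_lift = nc_linext lift_word"

lemma lift_letter_ad_x: "lift_letter (ad_x k n) = ad_x1_pow n (letter (GX k))"
  by (simp add: ad_x_def)

lemma lift_letter_ad_y: "lift_letter (ad_y k n) = ad_x1_pow n (letter (GY k))"
  by (simp add: ad_y_def)

lemma nc_finite_lift_word: "nc_finite (lift_word w :: 'k::field nc)"
proof (induction w)
  case (Cons a w)
  have "nc_finite (lift_letter a :: 'k nc)"
    by (cases a) (simp_all add: nc_finite_ad_x1_pow nc_finite_letter)
  with Cons.IH show ?case by (simp add: nc_finite_mul)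
qed (simp add: nc_finite_one)

lemma nc_linear_lift: "nc_linear nc_lift"
  unfolding nc_lift_def by (rule nc_linear_linext_map) (rule nc_finite_lift_word)

lemmas nc_lift_add = nc_linear_add[OF nc_linear_lift]
  and nc_lift_diff = nc_linear_diff[OF nc_linear_lift]
  and nc_lift_smult = nc_linear_smult[OF nc_linear_lift]
  and nc_lift_zero = nc_linear_zero[OF nc_linear_lift]
  and nc_lift_sum = nc_linear_sum[OF nc_linear_lift]

lemma lift_word_append: "lift_word (u @ v) = nc_mul (lift_word u) (lift_word v)"
  by (induction u) (simp_all add: nc_mul_assoc)

lemma nc_lift_mul:
  assumes p: "nc_finite p" and q: "nc_finite q"
  shows "nc_lift (nc_mul p q) = nc_mul (nc_lift p) (nc_lift q)"
proof -
  have "nc_lift (nc_mul p q) = nc_linext (\<lambda>u. nc_linext (\<lambda>v. lift_word (u @ v)) q) p"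
    unfolding nc_lift_def by (rule nc_linext_mul[OF p q])
  also have "\<dots> = nc_mul (nc_lift p) (nc_lift q)"
    by (simp only: lift_word_append nc_lift_def flip: nc_mul_linext_right nc_mul_linext_left)
  finally show ?thesis .
qed

lemma nc_lift_letter: "nc_lift (letter a) = lift_letter a"
  unfolding nc_lift_def letter_eq_monom nc_linext_monom by simp

lemma nc_lift_bracket:
  "nc_finite p \<Longrightarrow> nc_finite q \<Longrightarrow> nc_lift (nc_bracket p q) = nc_bracket (nc_lift p) (nc_lift q)"
  unfolding nc_bracket_def by (rule ext) (simp add: nc_lift_diff nc_finite_mul nc_lift_mul)

lemma nc_lift_in_free_lie:
  assumes g: "g \<ge> 1"
  shows "m \<in> lie_span (target_letters g) \<Longrightarrow> nc_lift m \<in> (free_lie g :: 'k::field nc set)"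
proof (induction rule: lie_span.induct)
  case (lie_span_letter a)
  then show ?case
    using g by (auto simp: target_letters_def nc_lift_letter lift_letter_ad_x lift_letter_ad_y
        gens_def intro!: ad_x1_pow_in_free_lie fl_gen)
next
  case lie_span_zero
  then show ?case by (simp add: nc_lift_zero fl_zero)
next
  case (lie_span_add p q)
  then show ?case
    using fl_add[of "nc_lift p" g "nc_lift q"] by (simp add: nc_lift_add lie_span_finite nc_add_def)
next
  case (lie_span_smult p c)
  then show ?case
    using fl_smult[of "nc_lift p" g c] by (simp add: nc_lift_smult lie_span_finite nc_smult_def)
next
  case (lie_span_bracket p q)
  then show ?case by (simp add: nc_lift_bracket lie_span_finite fl_bracket)
qed

section \<open>A representation of \<open>t\<^sub>(\<^sub>g\<^sub>)(1)\<close> on the target algebra\<close>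

fun letter_action :: "nat \<Rightarrow> gen \<Rightarrow> 'k::field nc \<Rightarrow> 'k nc" where
  "letter_action g (GX k) = (if k = 1 then nc_deriv g else nc_mul (letter (ad_x k 0)))"
| "letter_action g (GY k) = (if k = 1 then nc_mul (letter GT) else nc_mul (letter (ad_y k 0)))"
| "letter_action g GT = (\<lambda>f w. 0)"

fun word_action :: "nat \<Rightarrow> gen list \<Rightarrow> 'k::field nc \<Rightarrow> 'k nc" where
  "word_action g [] f = f"
| "word_action g (a # w) f = letter_action g a (word_action g w f)"

definition nc_action :: "nat \<Rightarrow> 'k::field nc \<Rightarrow> 'k nc \<Rightarrow> 'k nc" where
  "nc_action g p f = nc_linext (\<lambda>w. word_action g w f) p"

lemma nc_linear_letter_action: "nc_linear (letter_action g a)"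
  by (cases a) (auto simp: nc_linear_deriv nc_linear_mul_left nc_finite_letter nc_linear_zero_map)

lemma nc_linear_word_action: "nc_linear (word_action g w :: 'k::field nc \<Rightarrow> 'k nc)"
proof (induction w)
  case Nil
  then show ?case using nc_linear_id by (simp flip: fun_eq_iff)
next
  case (Cons a w)
  then show ?case
    using nc_linear_comp[OF nc_linear_letter_action Cons.IH] by (simp flip: fun_eq_iff)
qed

lemma word_action_append: "word_action g (u @ v) f = word_action g u (word_action g v f)"
  by (induction u) auto

lemma nc_finite_action: "nc_finite p \<Longrightarrow> nc_finite f \<Longrightarrow> nc_finite (nc_action g p f)"
  unfolding nc_action_def
  by (rule nc_finite_linext) (auto intro: nc_linear_finite[OF nc_linear_word_action])

lemma nc_action_mul:
  assumes p: "nc_finite p" and q: "nc_finite q" and f: "nc_finite f"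
  shows "nc_action g (nc_mul p q) f = nc_action g p (nc_action g q f)"
proof -
  have "nc_action g (nc_mul p q) f = nc_linext (\<lambda>u. nc_linext (\<lambda>v. word_action g (u @ v) f) q) p"
    unfolding nc_action_def by (rule nc_linext_mul[OF p q])
  also have "\<dots> = nc_linext (\<lambda>u. word_action g u (nc_linext (\<lambda>v. word_action g v f) q)) p"
    by (simp only: word_action_append
        nc_linear_linext[OF nc_linear_word_action q nc_linear_finite[OF nc_linear_word_action f]])
  finally show ?thesis by (simp add: nc_action_def)
qed

lemma nc_action_add:
  "nc_finite p \<Longrightarrow> nc_finite q \<Longrightarrow>
   nc_action g (\<lambda>w. p w + q w) f = (\<lambda>x. nc_action g p f x + nc_action g q f x)"
  unfolding nc_action_def by (rule nc_linext_add)

lemma nc_action_diff: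
  "nc_finite p \<Longrightarrow> nc_finite q \<Longrightarrow>
   nc_action g (\<lambda>w. p w - q w) f = (\<lambda>x. nc_action g p f x - nc_action g q f x)"
  unfolding nc_action_def by (rule nc_linext_diff)

lemma nc_action_smult: "nc_finite p \<Longrightarrow> nc_action g (\<lambda>w. c * p w) f = (\<lambda>x. c * nc_action g p f x)"
  unfolding nc_action_def by (rule nc_linext_smult)

lemma nc_action_sum:
  "finite S \<Longrightarrow> (\<And>k. k \<in> S \<Longrightarrow> nc_finite (X k)) \<Longrightarrow>
   nc_action g (\<lambda>w. \<Sum>k\<in>S. X k w) f = (\<lambda>x. \<Sum>k\<in>S. nc_action g (X k) f x)"
  unfolding nc_action_def using nc_linext_sum[of S X _ "\<lambda>_. 1"] by simp

lemma nc_action_zero: "nc_action g (\<lambda>w. 0) f = (\<lambda>x. 0)"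
  unfolding nc_action_def by (rule nc_linext_zero)

lemma nc_action_zero_right: "nc_action g p (\<lambda>w. 0) = (\<lambda>x. 0)"
  unfolding nc_action_def by (simp add: nc_linear_zero[OF nc_linear_word_action] nc_linext_fun_zero)

lemma nc_action_letter: "nc_action g (letter a) f = letter_action g a f"
  unfolding nc_action_def letter_eq_monom nc_linext_monom by simp

lemma nc_action_bracket:
  "nc_finite p \<Longrightarrow> nc_finite q \<Longrightarrow> nc_finite f \<Longrightarrow>
   nc_action g (nc_bracket p q) f = (\<lambda>x. nc_action g p (nc_action g q f) x - nc_action g q (nc_action g p f) x)"
  unfolding nc_bracket_def by (simp add: nc_action_diff nc_finite_mul nc_action_mul)

lemma nc_action_bracket_x1_y1:
  assumes f: "nc_finite f"
  shows "nc_action g (nc_bracket (letter (GX 1)) (letter (GY 1))) f = nc_mul (deriv_letter g GT) f"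
proof -
  have "nc_action g (nc_bracket (letter (GX 1)) (letter (GY 1))) f =
      (\<lambda>x. nc_deriv g (nc_mul (letter GT) f) x - nc_mul (letter GT) (nc_deriv g f) x)"
    by (simp add: nc_action_bracket nc_finite_letter f nc_action_letter)
  also have "\<dots> = nc_mul (deriv_letter g GT) f"
    by (simp add: nc_deriv_mul nc_finite_letter f nc_deriv_letter)
  finally show ?thesis .
qed

lemma nc_action_bracket_xk_yk:
  assumes k: "k \<noteq> 1" and f: "nc_finite f"
  shows "nc_action g (nc_bracket (letter (GX k)) (letter (GY k))) f =
    nc_mul (nc_bracket (letter (ad_x k 0)) (letter (ad_y k 0))) f"
proof -
  have "nc_action g (nc_bracket (letter (GX k)) (letter (GY k))) f =
      (\<lambda>x. nc_mul (letter (ad_x k 0)) (nc_mul (letter (ad_y k 0)) f) x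
        - nc_mul (letter (ad_y k 0)) (nc_mul (letter (ad_x k 0)) f) x)"
    using k f by (simp add: nc_action_bracket nc_finite_letter nc_action_letter)
  also have "\<dots> = nc_mul (nc_bracket (letter (ad_x k 0)) (letter (ad_y k 0))) f"
    by (simp add: nc_bracket_def nc_mul_diff_left nc_mul_assoc)
  finally show ?thesis .
qed

lemma nc_action_relator:
  assumes g: "g \<ge> 1" and f: "nc_finite f"
  shows "nc_action g (nc_add (\<lambda>w. \<Sum>k\<in>{1..g}. nc_bracket (letter (GX k)) (letter (GY k)) w)
           (nc_smult (2 - 2 * of_nat g) (letter GT))) f = (\<lambda>x. 0)"
proof -
  define B where "B = (\<lambda>k. nc_mul (nc_bracket (letter (ad_x k 0)) (letter (ad_y k 0))) f)"
  have "nc_action g (nc_bracket (letter (GX 1)) (letter (GY 1))) f =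
      (\<lambda>x. \<Sum>k\<in>{2..g}. (-1) * B k x)"
    unfolding nc_action_bracket_x1_y1[OF f] deriv_letter.simps B_def by (rule nc_mul_sum_left)
  moreover have "{1..g} = insert 1 {2..g}"
    using g by auto
  ultimately have "(\<lambda>x. \<Sum>k\<in>{1..g}.
      nc_action g (nc_bracket (letter (GX k)) (letter (GY k))) f x) =
      (\<lambda>x. (\<Sum>k\<in>{2..g}. (-1) * B k x) + (\<Sum>k\<in>{2..g}. B k x))"
    using f by (simp add: nc_action_bracket_xk_yk B_def)
  also have "\<dots> = (\<lambda>x. 0)"
    by (simp add: sum_negf)
  finally show ?thesis
    unfolding nc_add_def nc_smult_def
    by (simp add: nc_action_add nc_action_smult nc_action_sum nc_action_letter nc_finite_smult
        nc_finite_letter nc_finite_bracket nc_finite_sum[where c="\<lambda>_. 1", simplified])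
qed

lemma nc_action_rel_ideal:
  assumes g: "g \<ge> 1" and p: "p \<in> rel_ideal g"
  shows "nc_finite f \<Longrightarrow> nc_action g p f = (\<lambda>x. 0)"
  using p
proof (induction arbitrary: f rule: rel_ideal.induct)
  case (ri_rel r)
  then show ?case
    using nc_action_relator[OF g]
    by (auto simp: rels_def nc_action_bracket nc_finite_letter nc_action_letter
        nc_linear_zero[OF nc_linear_letter_action])
next
  case ri_zero
  then show ?case by (simp add: nc_action_zero)
next
  case (ri_add p q)
  then show ?case by (simp add: nc_add_def nc_action_add rel_ideal_finite)
next
  case (ri_smult p c)
  then show ?case by (simp add: nc_smult_def nc_action_smult rel_ideal_finite)
next
  case (ri_bracket p q)
  then show ?case
    by (simp add: nc_action_bracket rel_ideal_finite free_lie_finite nc_finite_action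
        nc_action_zero_right)
qed

section \<open>Normal form of Lie elements\<close>

lemma nc_deriv_in_target_lie:
  "m \<in> lie_span (target_letters g) \<Longrightarrow>
   nc_deriv g m \<in> (lie_span (target_letters g) :: 'k::field nc set)"
proof (induction rule: lie_span.induct)
  case (lie_span_letter a)
  then consider (x) k n where "a = ad_x k n" "2 \<le> k" "k \<le> g"
    | (y) k n where "a = ad_y k n" "2 \<le> k" "k \<le> g"
    | (t) "a = GT"
    unfolding target_letters_def by blast
  then show ?case
  proof cases
    case x
    then have "ad_x k (Suc n) \<in> target_letters g"
      unfolding target_letters_def by blast
    with x show ?thesis by (simp add: nc_deriv_letter deriv_letter_ad_x lie_span.lie_span_letter)
  next
    case y
    then have "ad_y k (Suc n) \<in> target_letters g"
      unfolding target_letters_def by blast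
    with y show ?thesis by (simp add: nc_deriv_letter deriv_letter_ad_y lie_span.lie_span_letter)
  next
    case t
    have "ad_x k 0 \<in> target_letters g" "ad_y k 0 \<in> target_letters g" if "k \<in> {2..g}" for k
      using that unfolding target_letters_def by auto
    then show ?thesis
      unfolding t nc_deriv_letter deriv_letter.simps
      by (intro lie_span_sum lie_span.lie_span_bracket lie_span.lie_span_letter) auto
  qed
next
  case lie_span_zero
  then show ?case by (simp add: nc_deriv_zero lie_span.lie_span_zero)
next
  case (lie_span_add p q)
  then show ?case by (simp add: nc_deriv_add lie_span_finite lie_span.lie_span_add)
next
  case (lie_span_smult p c)
  then show ?case by (simp add: nc_deriv_smult lie_span_finite lie_span.lie_span_smult)
next
  case (lie_span_bracket p q)
  then show ?case
    by (simp add: nc_deriv_bracket lie_span_finite lie_span.lie_span_add lie_span.lie_span_bracket)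
qed

lemma nc_lift_deriv_letter_GT:
  "nc_lift (nc_deriv g (letter GT)) =
   (\<lambda>x. \<Sum>k\<in>{2..g}. (-1) * nc_bracket (letter (GX k)) (letter (GY k)) x :: 'k::field)"
proof -
  have "nc_lift (nc_deriv g (letter GT)) =
      (\<lambda>x. \<Sum>k\<in>{2..g}. (-1) * nc_lift (nc_bracket (letter (ad_x k 0)) (letter (ad_y k 0))) x :: 'k)"
    unfolding nc_deriv_letter deriv_letter.simps
    by (rule nc_lift_sum) (auto intro: nc_finite_bracket nc_finite_letter)
  then show ?thesis
    by (simp add: nc_lift_bracket nc_finite_letter nc_lift_letter lift_letter_ad_x lift_letter_ad_y)
qed

definition lift_defect :: "nat \<Rightarrow> 'k::field nc \<Rightarrow> 'k nc" where
  "lift_defect g m = (\<lambda>w. nc_bracket (letter (GX 1)) (nc_lift m) w - nc_lift (nc_deriv g m) w)"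

lemma lift_defect_zero: "lift_defect g (\<lambda>w. 0) = (\<lambda>w. 0)"
  by (simp add: lift_defect_def nc_lift_zero nc_deriv_zero nc_bracket_zero_right)

lemma lift_defect_add:
  "nc_finite p \<Longrightarrow> nc_finite q \<Longrightarrow>
   lift_defect g (\<lambda>w. p w + q w) = (\<lambda>w. lift_defect g p w + lift_defect g q w)"
  by (simp add: lift_defect_def nc_finite_deriv nc_lift_add nc_deriv_add nc_bracket_add_right
      algebra_simps)

lemma lift_defect_smult:
  "nc_finite p \<Longrightarrow> lift_defect g (\<lambda>w. c * p w) = (\<lambda>w. c * lift_defect g p w)"
  by (simp add: lift_defect_def nc_finite_deriv nc_lift_smult nc_deriv_smult nc_bracket_smult_right
      algebra_simps)

lemma lift_defect_bracket:
  assumes "nc_finite p" "nc_finite q"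
  shows "lift_defect g (nc_bracket p q) =
    (\<lambda>w. nc_bracket (lift_defect g p) (nc_lift q) w + nc_bracket (nc_lift p) (lift_defect g q) w)"
  using assms nc_finite_deriv[OF assms(1)] nc_finite_deriv[OF assms(2)]
  by (rule_tac ext) (simp add: lift_defect_def nc_lift_bracket nc_deriv_bracket nc_lift_add
      nc_finite_bracket nc_bracket_jacobi[of "letter (GX (Suc 0))" "nc_lift p" "nc_lift q"]
      nc_bracket_diff_left nc_bracket_diff_right)

text \<open>On the letter t the defect is exactly the relator sum_k [x_k, y_k].\<close>
lemma lift_defect_letter:
  assumes g: "g \<ge> 2" and a: "a \<in> target_letters g"
  shows "lift_defect g (letter a) \<in> (rel_ideal_plus_t g :: 'k::field nc set)"
proof -
  from a consider (x) k n where "a = ad_x k n" | (y) k n where "a = ad_y k n" | (t) "a = GT"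
    unfolding target_letters_def by blast
  then show ?thesis
  proof cases
    case t
    have "{1..g} = insert 1 {2..g}"
      using g by auto
    then have "lift_defect g (letter GT) =
        (\<lambda>w. \<Sum>k\<in>{1..g}. nc_bracket (letter (GX k)) (letter (GY k)) w :: 'k)"
      by (simp add: lift_defect_def nc_lift_deriv_letter_GT nc_lift_letter sum_negf)
    with t show ?thesis
      using sum_brackets_in_rel_ideal_plus_t by simp
  qed (simp_all add: lift_defect_def nc_lift_letter nc_deriv_letter deriv_letter_ad_x
      deriv_letter_ad_y lift_letter_ad_x lift_letter_ad_y ad_x1_pow_Suc rel_ideal_plus_t_zero)
qed

lemma lift_defect_in_rel_ideal_plus_t:
  assumes g: "g \<ge> 2"
  shows "m \<in> lie_span (target_letters g) \<Longrightarrow> lift_defect g m \<in> (rel_ideal_plus_t g :: 'k::field nc set)"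
proof (induction rule: lie_span.induct)
  case (lie_span_letter a)
  then show ?case by (rule lift_defect_letter[OF g])
next
  case lie_span_zero
  then show ?case by (simp add: lift_defect_zero rel_ideal_plus_t_zero)
next
  case (lie_span_add p q)
  then show ?case by (simp add: lift_defect_add lie_span_finite rel_ideal_plus_t_add)
next
  case (lie_span_smult p c)
  then show ?case by (simp add: lift_defect_smult lie_span_finite rel_ideal_plus_t_smult)
next
  case (lie_span_bracket p q)
  then show ?case
    using g by (simp add: lift_defect_bracket lie_span_finite rel_ideal_plus_t_add
        rel_ideal_plus_t_bracket_right rel_ideal_plus_t_bracket_left nc_lift_in_free_lie)
qed

definition acts_as :: "nat \<Rightarrow> 'k::field nc \<Rightarrow> 'k \<Rightarrow> 'k nc \<Rightarrow> bool" where
  "acts_as g p c m \<longleftrightarrow>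
     (\<forall>f. nc_finite f \<longrightarrow> nc_action g p f = (\<lambda>w. c * nc_deriv g f w + nc_mul m f w))"

definition normal_form :: "nat \<Rightarrow> 'k::field nc \<Rightarrow> 'k \<Rightarrow> 'k nc \<Rightarrow> bool" where
  "normal_form g p c m \<longleftrightarrow> m \<in> lie_span (target_letters g) \<and> acts_as g p c m \<and>
     (\<lambda>w. p w - c * letter (GX 1) w - nc_lift m w) \<in> rel_ideal_plus_t g"

lemma acts_as_add:
  "acts_as g p c1 m1 \<Longrightarrow> acts_as g q c2 m2 \<Longrightarrow> nc_finite p \<Longrightarrow> nc_finite q \<Longrightarrow>
   acts_as g (\<lambda>w. p w + q w) (c1 + c2) (\<lambda>w. m1 w + m2 w)"
  unfolding acts_as_def by (simp add: nc_action_add nc_mul_add_left algebra_simps)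

lemma acts_as_smult:
  "acts_as g p c m \<Longrightarrow> nc_finite p \<Longrightarrow> acts_as g (\<lambda>w. a * p w) (a * c) (\<lambda>w. a * m w)"
  unfolding acts_as_def by (simp add: nc_action_smult nc_mul_smult_left algebra_simps)

lemma acts_as_bracket:
  assumes p: "acts_as g p c1 m1" and q: "acts_as g q c2 m2"
    and fin: "nc_finite p" "nc_finite q" "nc_finite m1" "nc_finite m2"
  shows "acts_as g (nc_bracket p q) 0
           (\<lambda>w. c1 * nc_deriv g m2 w + (- c2 * nc_deriv g m1 w + nc_bracket m1 m2 w))"
  unfolding acts_as_def
proof (intro allI impI)
  fix f :: "'a nc" assume f: "nc_finite f"
  have fin_f: "nc_finite (nc_deriv g f)" "nc_finite (nc_deriv g (nc_deriv g f))"
    using f by (auto intro: nc_finite_deriv)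
  have p_f: "nc_action g p f = (\<lambda>w. c1 * nc_deriv g f w + nc_mul m1 f w)"
    and q_f: "nc_action g q f = (\<lambda>w. c2 * nc_deriv g f w + nc_mul m2 f w)"
    using p q f unfolding acts_as_def by blast+
  have "nc_finite (\<lambda>w. c1 * nc_deriv g f w + nc_mul m1 f w)"
    "nc_finite (\<lambda>w. c2 * nc_deriv g f w + nc_mul m2 f w)"
    using fin fin_f f by (auto intro!: nc_finite_add nc_finite_smult nc_finite_mul)
  then have pq: "nc_action g p (nc_action g q f) = (\<lambda>w. c1 * (c2 * nc_deriv g (nc_deriv g f) w
        + (nc_mul (nc_deriv g m2) f w + nc_mul m2 (nc_deriv g f) w))
        + (c2 * nc_mul m1 (nc_deriv g f) w + nc_mul m1 (nc_mul m2 f) w))"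
    and qp: "nc_action g q (nc_action g p f) = (\<lambda>w. c2 * (c1 * nc_deriv g (nc_deriv g f) w
        + (nc_mul (nc_deriv g m1) f w + nc_mul m1 (nc_deriv g f) w))
        + (c1 * nc_mul m2 (nc_deriv g f) w + nc_mul m2 (nc_mul m1 f) w))"
    using p q fin fin_f f unfolding p_f q_f acts_as_def
    by (simp_all add: nc_deriv_add nc_deriv_smult nc_deriv_mul nc_finite_smult nc_finite_mul
        nc_mul_add_right nc_mul_smult_right)
  have "nc_action g (nc_bracket p q) f =
      (\<lambda>w. nc_action g p (nc_action g q f) w - nc_action g q (nc_action g p f) w)"
    by (rule nc_action_bracket[OF fin(1,2) f])
  also have "\<dots> = (\<lambda>w. 0 * nc_deriv g f w +
      nc_mul (\<lambda>w. c1 * nc_deriv g m2 w + (- c2 * nc_deriv g m1 w + nc_bracket m1 m2 w)) f w)"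
    unfolding pq qp nc_bracket_def
    by (rule ext) (simp add: nc_mul_add_left nc_mul_smult_left nc_mul_diff_left nc_mul_assoc
        algebra_simps)
  finally show "nc_action g (nc_bracket p q) f = (\<lambda>w. 0 * nc_deriv g f w +
      nc_mul (\<lambda>w. c1 * nc_deriv g m2 w + (- c2 * nc_deriv g m1 w + nc_bracket m1 m2 w)) f w)" .
qed

lemma lift_congruent_bracket:
  fixes p q :: "'k::field nc"
  defines "x\<^sub>1 \<equiv> letter (GX 1)"
  assumes g: "g \<ge> 2" and p: "p \<in> free_lie g" and q: "q \<in> free_lie g"
    and m1: "m1 \<in> lie_span (target_letters g)" and m2: "m2 \<in> lie_span (target_letters g)"
    and p_mod: "(\<lambda>w. p w - c1 * x\<^sub>1 w - nc_lift m1 w) \<in> rel_ideal_plus_t g"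
    and q_mod: "(\<lambda>w. q w - c2 * x\<^sub>1 w - nc_lift m2 w) \<in> rel_ideal_plus_t g"
  shows "(\<lambda>w. nc_bracket p q w
           - nc_lift (\<lambda>w. c1 * nc_deriv g m2 w + (- c2 * nc_deriv g m1 w + nc_bracket m1 m2 w)) w)
         \<in> rel_ideal_plus_t g"
proof -
  define P where "P = (\<lambda>w. c1 * x\<^sub>1 w + nc_lift m1 w)"
  define Q where "Q = (\<lambda>w. c2 * x\<^sub>1 w + nc_lift m2 w)"
  define dp where "dp = (\<lambda>w. p w - c1 * x\<^sub>1 w - nc_lift m1 w)"
  define dq where "dq = (\<lambda>w. q w - c2 * x\<^sub>1 w - nc_lift m2 w)"
  have fin: "nc_finite m1" "nc_finite m2" "nc_finite (nc_deriv g m1)" "nc_finite (nc_deriv g m2)"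
    using m1 m2 by (auto simp: lie_span_finite nc_finite_deriv)
  have "x\<^sub>1 \<in> free_lie g"
    unfolding x\<^sub>1_def using g by (intro fl_gen) (auto simp: gens_def)
  then have P_lie: "P \<in> free_lie g"
    using nc_lift_in_free_lie[OF _ m1] g unfolding P_def free_lie_eq_lie_span
    by (intro lie_span.lie_span_add lie_span.lie_span_smult) auto
  have "p = (\<lambda>w. dp w + P w)" "q = (\<lambda>w. dq w + Q w)"
    by (simp_all add: dp_def P_def dq_def Q_def)
  then have "nc_bracket p q = (\<lambda>w. nc_bracket dp q w + nc_bracket P q w)"
    and "nc_bracket P q = (\<lambda>w. nc_bracket P dq w + nc_bracket P Q w)"
    by (metis nc_bracket_add_left, metis nc_bracket_add_right)
  then have "nc_bracket p q = (\<lambda>w. nc_bracket dp q w + (nc_bracket P dq w + nc_bracket P Q w))"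
    by simp
  also have "nc_bracket P Q = (\<lambda>w. c1 * nc_bracket x\<^sub>1 (nc_lift m2) w
      - c2 * nc_bracket x\<^sub>1 (nc_lift m1) w + nc_bracket (nc_lift m1) (nc_lift m2) w)"
    unfolding P_def Q_def
    by (rule ext) (simp add: nc_bracket_add_left nc_bracket_add_right nc_bracket_smult_left
        nc_bracket_smult_right nc_bracket_self nc_bracket_antisym[of "nc_lift m1" x\<^sub>1] algebra_simps)
  finally have "(\<lambda>w. nc_bracket p q w
      - nc_lift (\<lambda>w. c1 * nc_deriv g m2 w + (- c2 * nc_deriv g m1 w + nc_bracket m1 m2 w)) w) =
      (\<lambda>w. nc_bracket dp q w + (nc_bracket P dq w
        + (c1 * lift_defect g m2 w + (- c2) * lift_defect g m1 w)))"
    unfolding lift_defect_def x\<^sub>1_def using fin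
    by (simp add: nc_lift_add nc_lift_diff nc_lift_smult nc_lift_bracket nc_finite_add
        nc_finite_diff nc_finite_smult nc_finite_bracket algebra_simps)
  also have "\<dots> \<in> rel_ideal_plus_t g"
    using p_mod q_mod p q P_lie lift_defect_in_rel_ideal_plus_t[OF g] m1 m2
    unfolding dp_def dq_def
    by (intro rel_ideal_plus_t_add rel_ideal_plus_t_bracket_right rel_ideal_plus_t_bracket_left
        rel_ideal_plus_t_smult) auto
  finally show ?thesis .
qed

lemma normal_form_zero: "normal_form g (\<lambda>w. 0) 0 (\<lambda>w. 0)"
  by (simp add: normal_form_def lie_span_zero acts_as_def nc_action_zero nc_mul_zero_left
      nc_lift_zero rel_ideal_plus_t_zero)

lemma normal_form_add:
  assumes p: "normal_form g p c1 m1" "nc_finite p" and q: "normal_form g q c2 m2" "nc_finite q"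
  shows "normal_form g (\<lambda>w. p w + q w) (c1 + c2) (\<lambda>w. m1 w + m2 w)"
proof -
  have "nc_finite m1" "nc_finite m2"
    using p q by (auto simp: normal_form_def lie_span_finite)
  moreover have "(\<lambda>w. (p w - c1 * letter (GX 1) w - nc_lift m1 w)
      + (q w - c2 * letter (GX 1) w - nc_lift m2 w)) \<in> rel_ideal_plus_t g"
    using p q by (intro rel_ideal_plus_t_add) (simp_all add: normal_form_def)
  ultimately show ?thesis
    using p q unfolding normal_form_def
    by (simp add: lie_span_add acts_as_add nc_lift_add algebra_simps)
qed

lemma normal_form_smult:
  assumes p: "normal_form g p c m" "nc_finite p"
  shows "normal_form g (\<lambda>w. a * p w) (a * c) (\<lambda>w. a * m w)"
proof -
  have "nc_finite m"
    using p by (auto simp: normal_form_def lie_span_finite)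
  moreover have "(\<lambda>w. a * (p w - c * letter (GX 1) w - nc_lift m w)) \<in> rel_ideal_plus_t g"
    using p by (intro rel_ideal_plus_t_smult) (simp add: normal_form_def)
  ultimately show ?thesis
    using p unfolding normal_form_def
    by (simp add: lie_span_smult acts_as_smult nc_lift_smult algebra_simps)
qed

lemma normal_form_bracket:
  assumes g: "g \<ge> 2" and p: "p \<in> free_lie g" "normal_form g p c1 m1"
    and q: "q \<in> free_lie g" "normal_form g q c2 m2"
  shows "normal_form g (nc_bracket p q) 0
           (\<lambda>w. c1 * nc_deriv g m2 w + (- c2 * nc_deriv g m1 w + nc_bracket m1 m2 w))"
proof -
  have m: "m1 \<in> lie_span (target_letters g)" "m2 \<in> lie_span (target_letters g)"
    using p q by (simp_all add: normal_form_def)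
  show ?thesis
    unfolding normal_form_def
  proof (intro conjI)
    show "(\<lambda>w. c1 * nc_deriv g m2 w + (- c2 * nc_deriv g m1 w + nc_bracket m1 m2 w))
        \<in> lie_span (target_letters g)"
      using m by (intro lie_span_add lie_span_smult lie_span_bracket nc_deriv_in_target_lie)
    show "acts_as g (nc_bracket p q) 0
        (\<lambda>w. c1 * nc_deriv g m2 w + (- c2 * nc_deriv g m1 w + nc_bracket m1 m2 w))"
      using p q m by (intro acts_as_bracket) (simp_all add: normal_form_def free_lie_finite lie_span_finite)
    show "(\<lambda>w. nc_bracket p q w - 0 * letter (GX 1) w
        - nc_lift (\<lambda>w. c1 * nc_deriv g m2 w + (- c2 * nc_deriv g m1 w + nc_bracket m1 m2 w)) w)
        \<in> rel_ideal_plus_t g"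
      using lift_congruent_bracket[OF g p(1) q(1) m] p q by (simp add: normal_form_def)
  qed
qed

lemma letter_normal_form:
  assumes "a \<in> gens g"
  shows "\<exists>c m. normal_form g (letter a) c (m :: 'k::field nc)"
proof -
  have target: "letter b \<in> (lie_span (target_letters g) :: 'k nc set)" if "b \<in> target_letters g" for b
    using that by (rule lie_span_letter)
  from assms consider (x1) "a = GX 1" | (xk) k where "a = GX k" "2 \<le> k" "k \<le> g"
    | (y1) "a = GY 1" | (yk) k where "a = GY k" "2 \<le> k" "k \<le> g" | (t) "a = GT"
    unfolding gens_def by force
  then show ?thesis
  proof cases
    case x1
    then show ?thesis
      by (intro exI[of _ 1] exI[of _ "\<lambda>_. 0"])
        (simp add: normal_form_def lie_span_zero acts_as_def nc_action_letter nc_mul_zero_left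
          nc_lift_zero rel_ideal_plus_t_zero)
  next
    case xk
    then have "ad_x k 0 \<in> target_letters g"
      unfolding target_letters_def by blast
    with xk show ?thesis
      by (intro exI[of _ 0] exI[of _ "letter (ad_x k 0)"])
        (simp add: normal_form_def target acts_as_def nc_action_letter nc_lift_letter
          lift_letter_ad_x rel_ideal_plus_t_zero)
  next
    case y1
    have "GT \<in> target_letters g"
      unfolding target_letters_def by blast
    with y1 show ?thesis
      by (intro exI[of _ 0] exI[of _ "letter GT"])
        (simp add: normal_form_def target acts_as_def nc_action_letter nc_lift_letter
          rel_ideal_plus_t_zero)
  next
    case yk
    then have "ad_y k 0 \<in> target_letters g"
      unfolding target_letters_def by blast
    with yk show ?thesis
      by (intro exI[of _ 0] exI[of _ "letter (ad_y k 0)"])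
        (simp add: normal_form_def target acts_as_def nc_action_letter nc_lift_letter
          lift_letter_ad_y rel_ideal_plus_t_zero)
  next
    case t
    then show ?thesis
      by (intro exI[of _ 0] exI[of _ "\<lambda>_. 0"])
        (simp add: normal_form_def lie_span_zero acts_as_def nc_action_letter nc_mul_zero_left
          nc_lift_zero letter_GT_in_rel_ideal_plus_t)
  qed
qed

lemma free_lie_normal_form:
  assumes g: "g \<ge> 2" and p: "p \<in> free_lie g"
  shows "\<exists>c m. normal_form g p c (m :: 'k::field nc)"
  using p
proof (induction rule: free_lie.induct)
  case (fl_gen a)
  then show ?case by (rule letter_normal_form)
next
  case fl_zero
  then show ?case using normal_form_zero by blast
next
  case (fl_add p q)
  then show ?case
    unfolding nc_add_def using normal_form_add free_lie_finite by blast
next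
  case (fl_smult p a)
  then show ?case
    unfolding nc_smult_def using normal_form_smult free_lie_finite by blast
next
  case (fl_bracket p q)
  then show ?case
    using normal_form_bracket[OF g] by blast
qed

section \<open>The center\<close>

lemma commutes_with_letter_eq:
  assumes "nc_mul m (letter a) = nc_mul (letter a) m"
  shows "m (x # w) = (if x = a then m (w @ [a]) else 0)"
proof -
  have "nc_mul m (letter a) (x # w @ [a]) = nc_mul (letter a) m (x # w @ [a])"
    using assms by simp
  then show ?thesis
    unfolding letter_eq_monom nc_mul_monom_left nc_mul_monom_right by simp
qed

lemma commutes_with_two_letters_eq_zero:
  assumes m0: "m [] = 0" and a: "nc_mul m (letter a) = nc_mul (letter a) m"
    and b: "nc_mul m (letter b) = nc_mul (letter b) m" and ab: "a \<noteq> b"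
  shows "m = (\<lambda>_. 0)"
proof
  fix w
  show "m w = 0"
  proof (cases w)
    case (Cons x w')
    then show ?thesis
      using commutes_with_letter_eq[OF a, of x w'] commutes_with_letter_eq[OF b, of x w'] ab
      by (cases "x = a") auto
  qed (simp add: m0)
qed

text \<open>Apply \<open>[u, v] \<in> rel_ideal g\<close>, which acts as zero, to the unit series.\<close>
lemma central_acts_as_commutator:
  assumes g: "g \<ge> 1" and u: "u \<in> center_reps g" and u_acts: "acts_as g u c m"
    and v: "v \<in> free_lie g" and v_acts: "\<And>f. nc_action g v f = nc_mul b f"
  shows "(\<lambda>w. c * nc_deriv g b w + nc_mul m b w - nc_mul b m w) = (\<lambda>w. 0)"
proof -
  have u_lie: "u \<in> free_lie g" and uv: "nc_bracket u v \<in> rel_ideal g"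
    using u v unfolding center_reps_def by auto
  have b: "nc_action g v nc_one = b"
    using v_acts by simp
  moreover have "nc_finite b"
    using nc_finite_action[OF free_lie_finite[OF v] nc_finite_one, of g] by (simp add: b)
  moreover have "nc_action g u nc_one = m"
    using u_acts unfolding acts_as_def by (simp add: nc_finite_one nc_deriv_one)
  moreover have "nc_action g (nc_bracket u v) nc_one =
      (\<lambda>x. nc_action g u (nc_action g v nc_one) x - nc_action g v (nc_action g u nc_one) x)"
    by (rule nc_action_bracket[OF free_lie_finite[OF u_lie] free_lie_finite[OF v] nc_finite_one])
  ultimately show ?thesis
    using nc_action_rel_ideal[OF g uv nc_finite_one] u_acts v_acts by (simp add: acts_as_def)
qed

lemma center_reps_congruent_t:
  fixes u :: "'k::field nc"
  assumes g: "g \<ge> 2" and u: "u \<in> center_reps g"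
  shows "\<exists>c. nc_add u (nc_smult (- c) (letter GT)) \<in> rel_ideal g"
proof -
  obtain c m where m: "m \<in> lie_span (target_letters g)" and u_acts: "acts_as g u c m"
    and u_mod: "(\<lambda>w. u w - c * letter (GX 1) w - nc_lift m w) \<in> rel_ideal_plus_t g"
    using free_lie_normal_form[OF g] u unfolding center_reps_def normal_form_def by blast
  have g1: "g \<ge> 1" and x2: "letter (GX 2) \<in> (free_lie g :: 'k nc set)"
    and y2: "letter (GY 2) \<in> (free_lie g :: 'k nc set)"
    using g by (auto intro!: fl_gen simp: gens_def)
  have x: "(\<lambda>w. c * nc_deriv g (letter (ad_x 2 0)) w + nc_mul m (letter (ad_x 2 0)) w
      - nc_mul (letter (ad_x 2 0)) m w) = (\<lambda>w. 0)"
    by (rule central_acts_as_commutator[OF g1 u u_acts x2]) (simp add: nc_action_letter)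
  have y: "(\<lambda>w. c * nc_deriv g (letter (ad_y 2 0)) w + nc_mul m (letter (ad_y 2 0)) w
      - nc_mul (letter (ad_y 2 0)) m w) = (\<lambda>w. 0)"
    by (rule central_acts_as_commutator[OF g1 u u_acts y2]) (simp add: nc_action_letter)
  have m0: "m [] = 0"
    using m by (rule lie_span_Nil)
  txt \<open>Read off the coefficient of the one-letter word x_2^(1).\<close>
  have "c = 0"
    using fun_cong[OF x, of "[ad_x 2 1]"] m0 unfolding nc_deriv_letter deriv_letter_ad_x
    by (simp add: nc_mul_singleton letter_def ad_x_def)
  then have "m = (\<lambda>_. 0)"
    using x y m0 by (intro commutes_with_two_letters_eq_zero[of m "ad_x 2 0" "ad_y 2 0"])
      (auto simp: fun_eq_iff ad_x_def ad_y_def)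
  with \<open>c = 0\<close> u_mod obtain d where "(\<lambda>w. u w - d * letter GT w) \<in> rel_ideal g"
    unfolding rel_ideal_plus_t_def by (auto simp: nc_lift_zero)
  then show ?thesis
    by (auto simp: nc_add_def nc_smult_def)
qed

theorem lemma8p2:
  fixes g :: nat
  assumes "g \<ge> 2"
  shows "center_reps g =
           {u \<in> free_lie g. \<exists>c::'k::field_char_0.
              nc_add u (nc_smult (- c) (letter GT)) \<in> rel_ideal g}
         \<and> (letter GT :: 'k nc) \<notin> rel_ideal g"
proof
  show "center_reps g = {u \<in> free_lie g. \<exists>c::'k.
      nc_add u (nc_smult (- c) (letter GT)) \<in> rel_ideal g}"
    using center_reps_congruent_t[OF assms] center_reps_if_congruent_t[where g = g]
    by (auto simp: center_reps_def[of g])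
  show "(letter GT :: 'k nc) \<notin> rel_ideal g"
    using assms by (intro letter_GT_notin_rel_ideal) simp
qed

end
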